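(* If $G$ is a finite group, then $S(G) = F(G)$.
   Context: $S(G) := \{ x \in G : x^{|G:H|} \in H \text{ for every subgroup } H \leqslant G \text{ of finite index}\}$. $F(G)$ is the Fitting subgroup of $G$, i.e. its largest nilpotent normal subgroup. *)

theory Defs
  imports "HOL-Algebra.Algebra"
begin

fun lower_central_series :: "('a, 'b) monoid_scheme \<Rightarrow> nat \<Rightarrow> 'a set" where
  "lower_central_series K 0 = carrier K"
| "lower_central_series K (Suc n) =
     generate K (\<Union>x \<in> lower_central_series K n. \<Union>y \<in> carrier K.
        { x \<otimes>\<^bsub>K\<^esub> y \<otimes>\<^bsub>K\<^esub> inv\<^bsub>K\<^esub> x \<otimes>\<^bsub>K\<^esub> inv\<^bsub>K\<^esub> y })"

definition nilpotent_group :: "('a, 'b) monoid_scheme \<Rightarrow> bool" where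
  "nilpotent_group K \<longleftrightarrow> group K \<and> (\<exists>n. lower_central_series K n = {\<one>\<^bsub>K\<^esub>})"

definition fitting_subgroup :: "('a, 'b) monoid_scheme \<Rightarrow> 'a set" where
  "fitting_subgroup G = (THE F. F \<lhd> G \<and> nilpotent_group (G\<lparr>carrier := F\<rparr>) \<and>
      (\<forall>N. N \<lhd> G \<and> nilpotent_group (G\<lparr>carrier := N\<rparr>) \<longrightarrow> N \<subseteq> F))"

definition S_set :: "('a, 'b) monoid_scheme \<Rightarrow> 'a set" where
  "S_set G = {x \<in> carrier G. \<forall>H. subgroup H G \<and> finite (rcosets\<^bsub>G\<^esub> H) \<longrightarrow>
      x [^]\<^bsub>G\<^esub> card (rcosets\<^bsub>G\<^esub> H) \<in> H}"

end

theory Submission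
  imports Defs
begin

text \<open>
  Every nilpotent normal subgroup \<open>M\<close> lies in \<open>S(G)\<close>: refining the lower central series of \<open>M\<close>
  by a subgroup \<open>Q \<le> M\<close> gives a chain from \<open>M\<close> down to \<open>Q\<close> in which each term is normal in the
  previous one, so \<open>x\<^bsup>|M:Q|\<^esup> \<in> Q\<close> for all \<open>x \<in> M\<close>; with \<open>Q = M \<inter> H\<close> the index \<open>|M:M \<inter> H|\<close>
  divides \<open>|G:H|\<close>.

  Conversely, let \<open>F\<close> be the product of the \<open>p\<close>-cores \<open>O\<^sub>p(G)\<close>, the intersections of all
  Sylow \<open>p\<close>-subgroups. If \<open>x \<in> S(G)\<close> and \<open>P\<close> is a Sylow \<open>p\<close>-subgroup then \<open>x\<^bsup>|G:P|\<^esup> \<in> P\<close>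
  with \<open>|G:P|\<close> prime to \<open>p\<close>, so the \<open>p\<close>-part of \<open>x\<close> lies in \<open>P\<close>, hence in \<open>O\<^sub>p(G)\<close>; thus
  \<open>S(G) \<subseteq> F\<close>. Finally \<open>F\<close> is nilpotent, because \<open>p\<close>-cores for different primes commute
  elementwise and every proper normal subgroup of a \<open>p\<close>-group has a nontrivial central
  quotient, so the upper central series of \<open>F\<close> keeps growing until it reaches \<open>F\<close>.
  Hence \<open>S(G) = F\<close> is the largest nilpotent normal subgroup.
\<close>

definition commutator :: "('a, 'b) monoid_scheme \<Rightarrow> 'a \<Rightarrow> 'a \<Rightarrow> 'a" where
  "commutator G x y = x \<otimes>\<^bsub>G\<^esub> y \<otimes>\<^bsub>G\<^esub> inv\<^bsub>G\<^esub> x \<otimes>\<^bsub>G\<^esub> inv\<^bsub>G\<^esub> y"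

fun lower_central :: "('a, 'b) monoid_scheme \<Rightarrow> 'a set \<Rightarrow> nat \<Rightarrow> 'a set" where
  "lower_central G M 0 = M"
| "lower_central G M (Suc n) =
     generate G (\<Union>x \<in> lower_central G M n. \<Union>y \<in> M. {commutator G x y})"

fun upper_central :: "('a, 'b) monoid_scheme \<Rightarrow> 'a set \<Rightarrow> nat \<Rightarrow> 'a set" where
  "upper_central G N 0 = {\<one>\<^bsub>G\<^esub>}"
| "upper_central G N (Suc i) = {x \<in> N. \<forall>g\<in>N. commutator G x g \<in> upper_central G N i}"

definition Sylow_subgroups :: "('a, 'b) monoid_scheme \<Rightarrow> nat \<Rightarrow> 'a set set" where
  "Sylow_subgroups G p = {P. subgroup P G \<and> card P = p ^ multiplicity p (order G)}"

definition p_core :: "('a, 'b) monoid_scheme \<Rightarrow> nat \<Rightarrow> 'a set" where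
  "p_core G p = {x \<in> carrier G. \<forall>P\<in>Sylow_subgroups G p. x \<in> P}"

definition product_of_p_cores :: "('a, 'b) monoid_scheme \<Rightarrow> 'a set" where
  "product_of_p_cores G = generate G (\<Union>p\<in>{p. Factorial_Ring.prime p}. p_core G p)"

lemma fitting_subgroup_eqI:
  assumes "F \<lhd> G" and "nilpotent_group (G\<lparr>carrier := F\<rparr>)"
    and "\<And>N. N \<lhd> G \<Longrightarrow> nilpotent_group (G\<lparr>carrier := N\<rparr>) \<Longrightarrow> N \<subseteq> F"
  shows "fitting_subgroup G = F"
  unfolding fitting_subgroup_def using assms by (intro the_equality) blast+

lemma (in group_action) prime_dvd_card_orbit:
  assumes p: "Factorial_Ring.prime p" and card: "order G = p ^ b"
    and x: "x \<in> E" and nontriv: "card (orbit G \<phi> x) \<noteq> 1"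
  shows "p dvd card (orbit G \<phi> x)"
proof -
  have "card (orbit G \<phi> x) * card (stabilizer G \<phi> x) = p ^ b"
    using orbit_stabilizer_theorem[OF x] card by simp
  hence "card (orbit G \<phi> x) dvd p ^ b" by (metis dvd_triv_left)
  then obtain k where "card (orbit G \<phi> x) = p ^ k"
    using divides_primepow_nat[OF p] by blast
  moreover have "k \<noteq> 0" using calculation nontriv by auto
  ultimately show ?thesis by simp
qed

context group
begin

lemma inv_cancel_left [simp]: "x \<in> carrier G \<Longrightarrow> y \<in> carrier G \<Longrightarrow> inv x \<otimes> (x \<otimes> y) = y"
  by (simp flip: m_assoc)

lemma inv_cancel_right [simp]: "x \<in> carrier G \<Longrightarrow> y \<in> carrier G \<Longrightarrow> x \<otimes> (inv x \<otimes> y) = y"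
  by (simp flip: m_assoc)

lemma commutator_conj:
  "g \<in> carrier G \<Longrightarrow> x \<in> carrier G \<Longrightarrow> y \<in> carrier G \<Longrightarrow>
    g \<otimes> commutator G x y \<otimes> inv g = commutator G (g \<otimes> x \<otimes> inv g) (g \<otimes> y \<otimes> inv g)"
  by (simp add: commutator_def m_assoc inv_mult_group)

lemma commutator_mult_left:
  "x \<in> carrier G \<Longrightarrow> y \<in> carrier G \<Longrightarrow> g \<in> carrier G \<Longrightarrow>
    commutator G (x \<otimes> y) g = (x \<otimes> commutator G y g \<otimes> inv x) \<otimes> commutator G x g"
  by (simp add: commutator_def m_assoc inv_mult_group)

lemma commutator_mult_right:
  "a \<in> carrier G \<Longrightarrow> g \<in> carrier G \<Longrightarrow> h \<in> carrier G \<Longrightarrow>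
    commutator G a (g \<otimes> h) = commutator G a g \<otimes> (g \<otimes> commutator G a h \<otimes> inv g)"
  by (simp add: commutator_def m_assoc inv_mult_group)

lemma commutator_inv_left:
  "x \<in> carrier G \<Longrightarrow> g \<in> carrier G \<Longrightarrow>
    commutator G (inv x) g = inv x \<otimes> inv (commutator G x g) \<otimes> inv (inv x)"
  by (simp add: commutator_def m_assoc inv_mult_group)

lemma commutator_inv_right:
  "a \<in> carrier G \<Longrightarrow> g \<in> carrier G \<Longrightarrow>
    commutator G a (inv g) = inv g \<otimes> inv (commutator G a g) \<otimes> inv (inv g)"
  by (simp add: commutator_def m_assoc inv_mult_group)

lemma commutator_eq_mult_conj:
  "x \<in> carrier G \<Longrightarrow> y \<in> carrier G \<Longrightarrow> commutator G x y = x \<otimes> (y \<otimes> inv x \<otimes> inv y)"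
  by (simp add: commutator_def m_assoc)

lemma commutator_eq_conj_mult:
  "x \<in> carrier G \<Longrightarrow> y \<in> carrier G \<Longrightarrow> commutator G x y = (x \<otimes> y \<otimes> inv x) \<otimes> inv y"
  by (simp add: commutator_def m_assoc)

lemma subgroup_conj_closed:
  "subgroup H G \<Longrightarrow> m \<in> H \<Longrightarrow> x \<in> H \<Longrightarrow> m \<otimes> x \<otimes> inv m \<in> H"
  by (meson subgroup.m_closed subgroup.m_inv_closed)

lemma subgroup_nat_pow_closed: "subgroup H G \<Longrightarrow> h \<in> H \<Longrightarrow> h [^] (n::nat) \<in> H"
  by (metis subgroup_int_pow_closed int_pow_int)

lemma subgroup_commutator_closed:
  "subgroup H G \<Longrightarrow> x \<in> H \<Longrightarrow> y \<in> H \<Longrightarrow> commutator G x y \<in> H"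
  unfolding commutator_def by (meson subgroup.m_closed subgroup.m_inv_closed)

lemma generate_conj_closed:
  assumes S: "S \<subseteq> carrier G" and A: "A \<subseteq> carrier G"
    and conj: "\<And>a s. a \<in> A \<Longrightarrow> s \<in> S \<Longrightarrow> a \<otimes> s \<otimes> inv a \<in> S"
    and a: "a \<in> A" and h: "h \<in> generate G S"
  shows "a \<otimes> h \<otimes> inv a \<in> generate G S"
  using h
proof (induct h rule: generate.induct)
  case one
  thus ?case using a A by (auto simp: generate.one)
next
  case (incl h)
  show ?case using generate.incl[OF conj[OF a incl]] .
next
  case (inv h)
  have "h \<in> carrier G" "a \<in> carrier G" using S A inv a by auto
  hence "inv (a \<otimes> h \<otimes> inv a) = a \<otimes> inv h \<otimes> inv a"
    by (simp add: inv_mult_group m_assoc)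
  thus ?case using generate_m_inv_closed[OF S generate.incl[OF conj[OF a inv]]] by simp
next
  case (eng h1 h2)
  have "h1 \<in> carrier G" "h2 \<in> carrier G" "a \<in> carrier G"
    using eng(1,3)[THEN generate_in_carrier[OF S]] a A by auto
  hence "a \<otimes> (h1 \<otimes> h2) \<otimes> inv a = (a \<otimes> h1 \<otimes> inv a) \<otimes> (a \<otimes> h2 \<otimes> inv a)"
    by (simp add: m_assoc)
  thus ?case using generate.eng[OF eng(2,4)] by simp
qed

lemma commutator_generate_mem:
  assumes S: "S \<subseteq> carrier G" and Z: "subgroup Z G" and a: "a \<in> carrier G"
    and conj: "\<And>h x. h \<in> generate G S \<Longrightarrow> x \<in> Z \<Longrightarrow> h \<otimes> x \<otimes> inv h \<in> Z"
    and gen: "\<And>h. h \<in> S \<Longrightarrow> commutator G a h \<in> Z"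
    and h: "h \<in> generate G S"
  shows "commutator G a h \<in> Z"
  using h
proof (induct h rule: generate.induct)
  case one
  thus ?case using a subgroup.one_closed[OF Z] by (simp add: commutator_def)
next
  case (incl h)
  thus ?case by (rule gen)
next
  case (inv h)
  have hc: "h \<in> carrier G" using inv S by blast
  have "inv h \<otimes> inv (commutator G a h) \<otimes> inv (inv h) \<in> Z"
    using conj[OF generate_m_inv_closed[OF S generate.incl[OF inv]]]
      subgroup.m_inv_closed[OF Z gen[OF inv]] by blast
  thus ?case using commutator_inv_right[OF a hc] by simp
next
  case (eng h1 h2)
  have "h1 \<in> carrier G" "h2 \<in> carrier G" using eng(1,3) generate_in_carrier[OF S] by auto
  thus ?case
    using commutator_mult_right[OF a] subgroup.m_closed[OF Z eng(2) conj[OF eng(1,4)]] by simp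
qed

lemma card_subgroup_pos:
  assumes "finite (carrier G)" "subgroup H G" shows "card H > 0"
  using assms subgroup.subset subgroup.one_closed
  by (metis card_gt_0_iff empty_iff rev_finite_subset)

lemma card_subgroup_dvd:
  assumes H: "subgroup H G" and K: "subgroup K G" and HK: "H \<subseteq> K"
  shows "card H dvd card K"
proof -
  have "card (rcosets\<^bsub>G\<lparr>carrier := K\<rparr>\<^esub> H) * card H = order (G\<lparr>carrier := K\<rparr>)"
    using group.lagrange[OF subgroup_imp_group[OF K] subgroup_incl[OF H K HK]] .
  thus ?thesis unfolding order_def by (metis dvd_triv_right partial_object.select_convs(1)
      partial_object.surjective partial_object.update_convs(1))
qed

lemma index_dvd_index_of_normal_inter:
  assumes fin: "finite (carrier G)" and M: "M \<lhd> G" and H: "subgroup H G"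
  shows "card M div card (M \<inter> H) dvd card (rcosets H)"
proof -
  have Ms: "subgroup M G" using M normal_imp_subgroup by blast
  interpret second_isomorphism_grp M G H
    unfolding second_isomorphism_grp_def second_isomorphism_grp_axioms_def using M H by blast
  have MH: "subgroup (M <#> H) G" using mult_norm_subgroup[OF M H] .
  have MHs: "subgroup (M \<inter> H) G" using subgroups_Inter_pair[OF Ms H] .
  have "order (G\<lparr>carrier := H\<rparr> Mod (M \<inter> H)) = order (G\<lparr>carrier := M <#> H\<rparr> Mod M)"
    using iso_same_order[OF normal_intersection_quotient_isom] .
  hence r: "card (rcosets\<^bsub>G\<lparr>carrier := H\<rparr>\<^esub> (M \<inter> H)) = card (rcosets\<^bsub>G\<lparr>carrier := M <#> H\<rparr>\<^esub> M)"
    unfolding order_def FactGroup_def by simp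
  have M_MH: "M \<subseteq> M <#> H"
    using subgroup.one_closed[OF H] Ms subgroup.subset unfolding set_mult_def by force
  have l1: "card (rcosets\<^bsub>G\<lparr>carrier := H\<rparr>\<^esub> (M \<inter> H)) * card (M \<inter> H) = card H"
    using group.lagrange[OF subgroup_imp_group[OF H] subgroup_incl[OF MHs H]] by (simp add: order_def)
  have l2: "card (rcosets\<^bsub>G\<lparr>carrier := M <#> H\<rparr>\<^esub> M) * card M = card (M <#> H)"
    using group.lagrange[OF subgroup_imp_group[OF MH] subgroup_incl[OF Ms MH M_MH]] by (simp add: order_def)
  have l3: "card (rcosets H) * card H = card (carrier G)"
    using lagrange[OF H] by (simp add: order_def)
  obtain j where j: "card (carrier G) = card (M <#> H) * j"
    using card_subgroup_dvd[OF MH subgroup_self] subgroup.subset[OF MH] by blast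
  obtain s where s: "card M = card (M \<inter> H) * s"
    using card_subgroup_dvd[OF MHs Ms] by blast
  define r0 where "r0 = card (rcosets\<^bsub>G\<lparr>carrier := H\<rparr>\<^esub> (M \<inter> H))"
  have ipos: "card (M \<inter> H) > 0" using card_subgroup_pos[OF fin MHs] .
  have rpos: "r0 > 0" using l1 card_subgroup_pos[OF fin H] unfolding r0_def by (metis gr0I mult_0)
  have "card (rcosets H) * (r0 * card (M \<inter> H)) = (r0 * card (M \<inter> H)) * (s * j)"
    using l1 l2 l3 j s r unfolding r0_def by (simp add: ac_simps)
  hence "card (rcosets H) = s * j" using rpos ipos by simp
  moreover have "card M div card (M \<inter> H) = s" using s ipos by simp
  ultimately show ?thesis by simp
qed

lemma pow_card_div_mem_normal:
  assumes fin: "finite (carrier G)" and B: "subgroup B G" and A: "subgroup A G" and AB: "A \<subseteq> B"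
    and nrm: "\<And>b a. b \<in> B \<Longrightarrow> a \<in> A \<Longrightarrow> b \<otimes> a \<otimes> inv b \<in> A"
    and z: "z \<in> B"
  shows "z [^] (card B div card A) \<in> A"
proof -
  define K where "K = G\<lparr>carrier := B\<rparr>"
  have K: "group K" unfolding K_def using subgroup_imp_group[OF B] .
  have AK: "subgroup A K" unfolding K_def using subgroup_incl[OF A B AB] .
  have "A \<lhd> K"
  proof (rule group.normal_invI[OF K AK])
    fix x h assume "x \<in> carrier K" "h \<in> A"
    thus "x \<otimes>\<^bsub>K\<^esub> h \<otimes>\<^bsub>K\<^esub> inv\<^bsub>K\<^esub> x \<in> A" using nrm B unfolding K_def by simp
  qed
  then interpret N: normal A K .
  have zK: "z \<in> carrier K" using z unfolding K_def by simp
  have zc: "z \<in> carrier G" using z B subgroup.subset by blast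
  have "A #>\<^bsub>K\<^esub> z \<in> carrier (K Mod A)"
    using zK unfolding FactGroup_def RCOSETS_def by auto
  hence "(A #>\<^bsub>K\<^esub> z) [^]\<^bsub>K Mod A\<^esub> order (K Mod A) = \<one>\<^bsub>K Mod A\<^esub>"
    using group.pow_order_eq_1[OF N.factorgroup_is_group] by blast
  moreover have "order (K Mod A) = card B div card A"
  proof -
    have "card (rcosets\<^bsub>K\<^esub> A) * card A = card B"
      using group.lagrange[OF K AK] unfolding K_def order_def by simp
    hence "card (rcosets\<^bsub>K\<^esub> A) = card B div card A"
      using card_subgroup_pos[OF fin A] by (metis nonzero_mult_div_cancel_right not_gr0)
    thus ?thesis unfolding order_def FactGroup_def by simp
  qed
  ultimately have "A #>\<^bsub>K\<^esub> (z [^]\<^bsub>K\<^esub> (card B div card A)) = A"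
    using N.FactGroup_pow[OF zK] by simp
  moreover have "z [^]\<^bsub>K\<^esub> (card B div card A) = z [^] (card B div card A)"
    unfolding K_def by (rule nat_pow_consistent[symmetric])
  moreover have "A #>\<^bsub>K\<^esub> w = A #> w" for w unfolding K_def r_coset_def by simp
  ultimately have "A #> (z [^] (card B div card A)) = A" by simp
  thus ?thesis using rcos_self[OF nat_pow_closed[OF zc] A] by metis
qed

lemma pow_card_div_mem_subnormal_chain:
  assumes fin: "finite (carrier G)"
    and T: "\<And>n. subgroup (T n) G" and dec: "\<And>n. T (Suc n) \<subseteq> T n"
    and nrm: "\<And>n b a. b \<in> T n \<Longrightarrow> a \<in> T (Suc n) \<Longrightarrow> b \<otimes> a \<otimes> inv b \<in> T (Suc n)"
    and y: "y \<in> T 0"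
  shows "y [^] (card (T 0) div card (T n)) \<in> T n"
proof (induct n)
  case 0
  have "y \<in> carrier G" using y subgroup.subset[OF T] by blast
  thus ?case using y card_subgroup_pos[OF fin T] by simp
next
  case (Suc n)
  have yc: "y \<in> carrier G" using y subgroup.subset[OF T] by blast
  have "T n \<subseteq> T 0" using dec by (induct n) auto
  hence dvd: "card (T n) dvd card (T 0)" "card (T (Suc n)) dvd card (T n)"
    using card_subgroup_dvd[OF T T] dec by auto
  have exp: "card (T 0) div card (T n) * (card (T n) div card (T (Suc n)))
      = card (T 0) div card (T (Suc n))"
    using dvd card_subgroup_pos[OF fin T, of "Suc n"] by (auto elim!: dvdE)
  have "(y [^] (card (T 0) div card (T n))) [^] (card (T n) div card (T (Suc n))) \<in> T (Suc n)"
    using pow_card_div_mem_normal[OF fin T T dec nrm Suc] .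
  thus ?case by (simp add: nat_pow_pow[OF yc] exp)
qed

subsection \<open>Nilpotent normal subgroups lie in \<open>S(G)\<close>\<close>

lemma lower_central_props:
  assumes M: "subgroup M G"
  shows "lower_central G M n \<subseteq> M \<and> subgroup (lower_central G M n) G \<and>
         (\<forall>m\<in>M. \<forall>x\<in>lower_central G M n. m \<otimes> x \<otimes> inv m \<in> lower_central G M n)"
proof (induct n)
  case 0
  then show ?case using M subgroup_conj_closed[OF M] by simp
next
  case (Suc n)
  have Mc: "M \<subseteq> carrier G" using M subgroup.subset by blast
  define S where "S = (\<Union>x \<in> lower_central G M n. \<Union>y \<in> M. {commutator G x y})"
  have SM: "S \<subseteq> M"
    using Suc subgroup_commutator_closed[OF M] unfolding S_def by blast
  have SI: "m \<otimes> s \<otimes> inv m \<in> S" if "m \<in> M" "s \<in> S" for m s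
  proof -
    obtain x y where xy: "x \<in> lower_central G M n" "y \<in> M" "s = commutator G x y"
      using \<open>s \<in> S\<close> S_def by auto
    have "m \<in> carrier G" "x \<in> carrier G" "y \<in> carrier G" using xy that Mc Suc by auto
    hence "m \<otimes> s \<otimes> inv m = commutator G (m \<otimes> x \<otimes> inv m) (m \<otimes> y \<otimes> inv m)"
      using commutator_conj xy by simp
    moreover have "m \<otimes> x \<otimes> inv m \<in> lower_central G M n" using Suc that xy by blast
    moreover have "m \<otimes> y \<otimes> inv m \<in> M" using subgroup_conj_closed[OF M] that xy by blast
    ultimately show ?thesis unfolding S_def by blast
  qed
  have "lower_central G M (Suc n) = generate G S" by (simp add: S_def)
  moreover have "generate G S \<subseteq> M" using generate_subgroup_incl[OF SM M] .
  moreover have "subgroup (generate G S) G" using generate_is_subgroup SM Mc by blast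
  moreover have "\<forall>m\<in>M. \<forall>x\<in>generate G S. m \<otimes> x \<otimes> inv m \<in> generate G S"
    using generate_conj_closed[of S M] SM Mc SI by blast
  ultimately show ?case by simp
qed

lemma lower_central_subset: "subgroup M G \<Longrightarrow> lower_central G M n \<subseteq> M"
  using lower_central_props by blast

lemma lower_central_subgroup: "subgroup M G \<Longrightarrow> subgroup (lower_central G M n) G"
  using lower_central_props by blast

lemma lower_central_conj_closed:
  "subgroup M G \<Longrightarrow> m \<in> M \<Longrightarrow> x \<in> lower_central G M n \<Longrightarrow>
    m \<otimes> x \<otimes> inv m \<in> lower_central G M n"
  using lower_central_props by blast

lemma lower_central_Suc_subset:
  assumes M: "subgroup M G"
  shows "lower_central G M (Suc n) \<subseteq> lower_central G M n"
proof -
  note L = lower_central_subgroup[OF M, of n]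
  have "commutator G x y \<in> lower_central G M n" if "x \<in> lower_central G M n" "y \<in> M" for x y
  proof -
    have "x \<in> carrier G" "y \<in> carrier G"
      using that lower_central_subset[OF M] subgroup.subset[OF M] by auto
    moreover have "y \<otimes> inv x \<otimes> inv y \<in> lower_central G M n"
      using lower_central_conj_closed[OF M that(2) subgroup.m_inv_closed[OF L that(1)]] .
    ultimately show ?thesis
      using commutator_eq_mult_conj subgroup.m_closed[OF L that(1)] by simp
  qed
  hence "(\<Union>x \<in> lower_central G M n. \<Union>y \<in> M. {commutator G x y}) \<subseteq> lower_central G M n"
    by blast
  thus ?thesis using generate_subgroup_incl[OF _ L] by simp
qed

lemma lower_central_series_eq:
  assumes M: "subgroup M G"
  shows "lower_central_series (G\<lparr>carrier := M\<rparr>) n = lower_central G M n"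
proof (induct n)
  case 0 thus ?case by simp
next
  case (Suc n)
  have "x \<in> M" if "x \<in> lower_central G M n" for x
    using that lower_central_subset[OF M] by blast
  hence eq: "(\<Union>x \<in> lower_central G M n. \<Union>y \<in> M.
      {x \<otimes> y \<otimes>\<^bsub>G\<lparr>carrier := M\<rparr>\<^esub> inv\<^bsub>G\<lparr>carrier := M\<rparr>\<^esub> x \<otimes>\<^bsub>G\<lparr>carrier := M\<rparr>\<^esub> inv\<^bsub>G\<lparr>carrier := M\<rparr>\<^esub> y})
     = (\<Union>x \<in> lower_central G M n. \<Union>y \<in> M. {commutator G x y})"
    using M by (intro SUP_cong refl) (simp add: commutator_def)
  have "(\<Union>x \<in> lower_central G M n. \<Union>y \<in> M. {commutator G x y}) \<subseteq> M"
    using lower_central_subset[OF M] subgroup_commutator_closed[OF M] by blast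
  thus ?case using Suc eq generate_consistent[OF _ M] by simp
qed

lemma lower_central_mult_conj_closed:
  assumes M: "subgroup M G" and Q: "subgroup Q G" and QM: "Q \<subseteq> M"
    and b: "b \<in> lower_central G M n <#> Q" and a: "a \<in> lower_central G M (Suc n) <#> Q"
  shows "b \<otimes> a \<otimes> inv b \<in> lower_central G M (Suc n) <#> Q"
proof -
  obtain g q where gq: "g \<in> lower_central G M n" "q \<in> Q" "b = g \<otimes> q"
    using b unfolding set_mult_def by blast
  obtain g' q' where gq': "g' \<in> lower_central G M (Suc n)" "q' \<in> Q" "a = g' \<otimes> q'"
    using a unfolding set_mult_def by blast
  have gM: "g \<in> M" "g' \<in> M" "q \<in> M" using gq gq' lower_central_subset[OF M] QM by blast+
  hence gc: "g \<in> carrier G" "g' \<in> carrier G" "q \<in> carrier G" "q' \<in> carrier G"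
    using subgroup.subset[OF M] gq' QM by blast+
  define g'' where "g'' = q \<otimes> g' \<otimes> inv q"
  define q'' where "q'' = q \<otimes> q' \<otimes> inv q"
  have g'': "g'' \<in> lower_central G M (Suc n)"
    unfolding g''_def using lower_central_conj_closed[OF M] gM gq' by blast
  have q'': "q'' \<in> Q" unfolding q''_def using subgroup_conj_closed[OF Q] gq gq' by blast
  have "b \<otimes> a \<otimes> inv b = (g \<otimes> g'' \<otimes> inv g \<otimes> commutator G g q'') \<otimes> q''"
    unfolding gq(3) gq'(3) g''_def q''_def commutator_def using gc by (simp add: m_assoc inv_mult_group)
  moreover have "commutator G g q'' \<in> lower_central G M (Suc n)"
    using gq(1) q'' QM by (auto intro: generate.incl)
  hence "g \<otimes> g'' \<otimes> inv g \<otimes> commutator G g q'' \<in> lower_central G M (Suc n)"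
    using subgroup.m_closed[OF lower_central_subgroup[OF M]] lower_central_conj_closed[OF M gM(1) g'']
    by blast
  ultimately show ?thesis using q'' unfolding set_mult_def by blast
qed

text \<open>The chain \<open>\<gamma>\<^sub>n(M) Q\<close> runs from \<open>M\<close> down to \<open>Q\<close>, each term normal in the previous one.\<close>

lemma pow_index_mem_of_nilpotent:
  assumes fin: "finite (carrier G)" and M: "subgroup M G" and c: "lower_central G M c = {\<one>}"
    and Q: "subgroup Q G" and QM: "Q \<subseteq> M" and y: "y \<in> M"
  shows "y [^] (card M div card Q) \<in> Q"
proof -
  define T where "T n = lower_central G M n <#> Q" for n
  have TS: "subgroup (T n) G" for n
  proof -
    define K where "K = G\<lparr>carrier := M\<rparr>"
    have K: "group K" unfolding K_def using subgroup_imp_group[OF M] .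
    have "lower_central G M n \<lhd> K"
    proof (rule group.normal_invI[OF K])
      show "subgroup (lower_central G M n) K" unfolding K_def
        using subgroup_incl[OF lower_central_subgroup[OF M] M lower_central_subset[OF M]] .
      fix x h assume "x \<in> carrier K" "h \<in> lower_central G M n"
      thus "x \<otimes>\<^bsub>K\<^esub> h \<otimes>\<^bsub>K\<^esub> inv\<^bsub>K\<^esub> x \<in> lower_central G M n"
        using lower_central_conj_closed[OF M] M unfolding K_def by simp
    qed
    hence "subgroup (lower_central G M n <#>\<^bsub>K\<^esub> Q) K"
      using group.mult_norm_subgroup[OF K] subgroup_incl[OF Q M QM] unfolding K_def by blast
    thus ?thesis using incl_subgroup[OF M] unfolding K_def T_def by (simp add: set_mult_def)
  qed
  have Tdec: "T (Suc n) \<subseteq> T n" for n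
    unfolding T_def using mono_set_mult[OF lower_central_Suc_subset[OF M] subset_refl] .
  have Tnorm: "b \<otimes> a \<otimes> inv b \<in> T (Suc n)" if "b \<in> T n" "a \<in> T (Suc n)" for n a b
    using lower_central_mult_conj_closed[OF M Q QM] that unfolding T_def .
  have T0: "T 0 = M"
    using set_mult_subgroup_idem[OF M subgroup_incl[OF Q M QM]] unfolding T_def by simp
  have Tc: "T c = Q"
    using Q subgroup.subset unfolding T_def c set_mult_def by force
  have "y [^] (card (T 0) div card (T c)) \<in> T c"
    using pow_card_div_mem_subnormal_chain[where T=T, OF fin TS Tdec Tnorm] y T0 by blast
  thus ?thesis using T0 Tc by simp
qed

lemma nilpotent_normal_subset_S_set:
  assumes fin: "finite (carrier G)" and M: "M \<lhd> G"
    and nil: "nilpotent_group (G\<lparr>carrier := M\<rparr>)"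
  shows "M \<subseteq> S_set G"
proof
  fix x assume x: "x \<in> M"
  have Ms: "subgroup M G" using M normal_imp_subgroup by blast
  have xc: "x \<in> carrier G" using x Ms subgroup.subset by blast
  obtain c where "lower_central_series (G\<lparr>carrier := M\<rparr>) c = {\<one>\<^bsub>G\<lparr>carrier := M\<rparr>\<^esub>}"
    using nil unfolding nilpotent_group_def by blast
  hence c: "lower_central G M c = {\<one>}" using lower_central_series_eq[OF Ms] by simp
  have "x [^] card (rcosets H) \<in> H" if H: "subgroup H G" for H
  proof -
    have "x [^] (card M div card (M \<inter> H)) \<in> H"
      using pow_index_mem_of_nilpotent[OF fin Ms c subgroups_Inter_pair[OF Ms H] _ x] by blast
    moreover obtain j where "card (rcosets H) = card M div card (M \<inter> H) * j"
      using index_dvd_index_of_normal_inter[OF fin M H] by blast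
    ultimately show ?thesis
      using subgroup_nat_pow_closed[OF H] by (simp add: nat_pow_pow[OF xc, symmetric])
  qed
  thus "x \<in> S_set G" unfolding S_set_def using xc by blast
qed

subsection \<open>Centres of \<open>p\<close>-groups\<close>

text \<open>The class equation: all nontrivial conjugacy classes have size divisible by \<open>p\<close>.\<close>

lemma p_group_center_nontrivial:
  assumes fin: "finite (carrier G)" and p: "Factorial_Ring.prime p"
    and card: "card (carrier G) = p ^ b" and b: "b > 0"
  shows "\<exists>z\<in>carrier G. z \<noteq> \<one> \<and> (\<forall>g\<in>carrier G. z \<otimes> g = g \<otimes> z)"
proof (rule ccontr)
  assume "\<not> ?thesis"
  hence ncentral: "\<exists>g\<in>carrier G. x \<otimes> g \<noteq> g \<otimes> x" if "x \<in> carrier G" "x \<noteq> \<one>" for x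
    using that by blast
  define \<phi> where "\<phi> = (\<lambda>g. \<lambda>h \<in> carrier G. g \<otimes> h \<otimes> inv g)"
  interpret A: group_action G "carrier G" \<phi> unfolding \<phi>_def using action_by_conjugation .
  have O1: "orbit G \<phi> \<one> = {\<one>}"
    unfolding orbit_def \<phi>_def by (auto intro: exI[where x="\<one>"])
  have O1in: "{\<one>} \<in> orbits G (carrier G) \<phi>" unfolding orbits_def using O1 by force
  have finO: "finite (orbits G (carrier G) \<phi>)" unfolding orbits_def using fin by simp
  have "(\<Sum>orb\<in>orbits G (carrier G) \<phi>. card orb) = (\<Sum>orb\<in>orbits G (carrier G) \<phi>. \<Sum>x\<in>orb. 1)"
    by simp
  also have "\<dots> = (\<Sum>x\<in>carrier G. 1)" using A.disjoint_sum[OF fin] .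
  also have "\<dots> = p ^ b" using card by simp
  finally have "p ^ b = 1 + (\<Sum>orb\<in>orbits G (carrier G) \<phi> - {{\<one>}}. card orb)"
    using sum.remove[OF finO O1in, of card] by simp
  moreover have "p dvd (\<Sum>orb\<in>orbits G (carrier G) \<phi> - {{\<one>}}. card orb)"
  proof (rule dvd_sum)
    fix orb assume "orb \<in> orbits G (carrier G) \<phi> - {{\<one>}}"
    then obtain x where x: "x \<in> carrier G" "orb = orbit G \<phi> x" "x \<noteq> \<one>"
      unfolding orbits_def using O1 by blast
    have orb: "orb = (\<lambda>g. g \<otimes> x \<otimes> inv g) ` carrier G"
      using x unfolding orbit_def \<phi>_def by auto
    obtain g where g: "g \<in> carrier G" "x \<otimes> g \<noteq> g \<otimes> x" using ncentral x by blast
    have "g \<otimes> x \<otimes> inv g \<noteq> x"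
    proof
      assume "g \<otimes> x \<otimes> inv g = x"
      hence "g \<otimes> x \<otimes> inv g \<otimes> g = x \<otimes> g" by simp
      thus False using g x by (simp add: m_assoc)
    qed
    moreover have "x \<in> orb" "g \<otimes> x \<otimes> inv g \<in> orb"
      unfolding orb using x g by (auto intro: image_eqI[where x="\<one>"])
    ultimately have "card orb \<noteq> 1" by (auto simp: card_1_singleton_iff)
    thus "p dvd card orb"
      using A.prime_dvd_card_orbit[OF p] card x unfolding order_def by blast
  qed
  moreover have "p dvd p ^ b" using b by simp
  ultimately have "p dvd 1" by (metis dvd_add_left_iff)
  thus False using p by simp
qed

lemma commutator_mem_of_rcos_eq:
  assumes W: "subgroup W G" and a: "a \<in> carrier G" and h: "h \<in> carrier G"
    and eq: "W #> (a \<otimes> h) = W #> (h \<otimes> a)"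
  shows "commutator G a h \<in> W"
proof -
  have "a \<otimes> h \<in> W #> (h \<otimes> a)" using eq rcos_self[OF _ W] a h by (metis m_closed)
  hence "(a \<otimes> h) \<otimes> inv (h \<otimes> a) \<in> W" using subgroup.rcos_module_imp[OF W is_group] a h by blast
  moreover have "(a \<otimes> h) \<otimes> inv (h \<otimes> a) = commutator G a h"
    using a h by (simp add: commutator_def m_assoc inv_mult_group)
  ultimately show ?thesis by simp
qed

lemma card_rcosets_of_p_group:
  assumes fin: "finite (carrier G)" and p: "Factorial_Ring.prime p" and card: "order G = p ^ f"
    and W: "subgroup W G" and WG: "W \<noteq> carrier G"
  obtains k where "k > 0" "card (rcosets W) = p ^ k"
proof -
  obtain g where g: "g \<le> f" "card W = p ^ g"
    using card_subgroup_dvd[OF W subgroup_self] subgroup.subset[OF W] card divides_primepow_nat[OF p]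
    unfolding order_def by auto
  have "card W < card (carrier G)" using subgroup.subset[OF W] WG fin by (meson psubsetI psubset_card_mono)
  hence "g < f" using g card prime_gt_1_nat[OF p] unfolding order_def
    by (metis leI not_less power_increasing_iff)
  moreover have "card (rcosets W) * p ^ g = p ^ (f - g) * p ^ g"
    using lagrange[OF W] card g by (simp add: power_add[symmetric])
  hence "card (rcosets W) = p ^ (f - g)" using prime_gt_0_nat[OF p] by simp
  ultimately show ?thesis using that[of "f - g"] by simp
qed

lemma p_group_central_mod_normal:
  assumes fin: "finite (carrier G)" and p: "Factorial_Ring.prime p" and card: "order G = p ^ f"
    and W: "W \<lhd> G" and WG: "W \<noteq> carrier G"
  obtains a where "a \<in> carrier G" "a \<notin> W" "\<And>h. h \<in> carrier G \<Longrightarrow> commutator G a h \<in> W"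
proof -
  interpret normal W G by (rule W)
  obtain k where k: "k > 0" "card (rcosets W) = p ^ k"
    using card_rcosets_of_p_group[OF fin p card subgroup_axioms WG] .
  have cQ: "card (carrier (G Mod W)) = p ^ k" using k(2) unfolding FactGroup_def by simp
  hence "finite (carrier (G Mod W))" using prime_gt_0_nat[OF p] card.infinite by fastforce
  then obtain z where z: "z \<in> carrier (G Mod W)" "z \<noteq> \<one>\<^bsub>G Mod W\<^esub>"
    and zc: "\<And>y. y \<in> carrier (G Mod W) \<Longrightarrow> z \<otimes>\<^bsub>G Mod W\<^esub> y = y \<otimes>\<^bsub>G Mod W\<^esub> z"
    using group.p_group_center_nontrivial[OF factorgroup_is_group _ p cQ k(1)] by blast
  obtain a where a: "a \<in> carrier G" "z = W #> a"
    using z(1) unfolding FactGroup_def RCOSETS_def by auto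
  have "a \<notin> W"
  proof
    assume "a \<in> W"
    hence "W #> a = W" using rcos_const by blast
    thus False using z(2) a unfolding FactGroup_def by simp
  qed
  moreover have "commutator G a h \<in> W" if h: "h \<in> carrier G" for h
  proof -
    have "W #> h \<in> carrier (G Mod W)" unfolding FactGroup_def RCOSETS_def using h by auto
    hence "(W #> a) <#> (W #> h) = (W #> h) <#> (W #> a)"
      using zc a(2) unfolding FactGroup_def by simp
    hence "W #> (a \<otimes> h) = W #> (h \<otimes> a)" using rcos_sum a(1) h by simp
    thus ?thesis using commutator_mem_of_rcos_eq[OF subgroup_axioms a(1) h] by blast
  qed
  ultimately show ?thesis using that a(1) by blast
qed

lemma central_mod_subgroup:
  assumes N: "subgroup N G" and Z: "subgroup Z G"
    and conj: "\<And>h x. h \<in> N \<Longrightarrow> x \<in> Z \<Longrightarrow> h \<otimes> x \<otimes> inv h \<in> Z"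
  shows "subgroup {x \<in> N. \<forall>g\<in>N. commutator G x g \<in> Z} G"
proof (rule subgroupI)
  have Nc: "N \<subseteq> carrier G" using N subgroup.subset by blast
  show "{x \<in> N. \<forall>g\<in>N. commutator G x g \<in> Z} \<subseteq> carrier G" using Nc by blast
  have "commutator G \<one> g = \<one>" if "g \<in> N" for g
    using that Nc by (simp add: commutator_def subsetD)
  hence "\<one> \<in> {x \<in> N. \<forall>g\<in>N. commutator G x g \<in> Z}"
    using subgroup.one_closed[OF N] subgroup.one_closed[OF Z] by simp
  thus "{x \<in> N. \<forall>g\<in>N. commutator G x g \<in> Z} \<noteq> {}" by blast
  fix x assume x: "x \<in> {x \<in> N. \<forall>g\<in>N. commutator G x g \<in> Z}"
  hence xN: "x \<in> N" by blast
  have "commutator G (inv x) g \<in> Z" if g: "g \<in> N" for g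
  proof -
    have "inv x \<otimes> inv (commutator G x g) \<otimes> inv (inv x) \<in> Z"
      using conj[OF subgroup.m_inv_closed[OF N xN]] subgroup.m_inv_closed[OF Z] x g by simp
    thus ?thesis using commutator_inv_left xN g Nc by (simp add: subsetD)
  qed
  thus "inv x \<in> {x \<in> N. \<forall>g\<in>N. commutator G x g \<in> Z}"
    using subgroup.m_inv_closed[OF N xN] by blast
  fix y assume y: "y \<in> {x \<in> N. \<forall>g\<in>N. commutator G x g \<in> Z}"
  hence yN: "y \<in> N" by blast
  have "commutator G (x \<otimes> y) g \<in> Z" if g: "g \<in> N" for g
  proof -
    have "(x \<otimes> commutator G y g \<otimes> inv x) \<otimes> commutator G x g \<in> Z"
      using conj[OF xN] subgroup.m_closed[OF Z] x y g by simp
    thus ?thesis using commutator_mult_left xN yN g Nc by (simp add: subsetD)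
  qed
  thus "x \<otimes> y \<in> {x \<in> N. \<forall>g\<in>N. commutator G x g \<in> Z}"
    using subgroup.m_closed[OF N xN yN] by blast
qed

lemma central_mod_conj_closed:
  assumes N: "subgroup N G"
    and conj: "\<And>h x. h \<in> N \<Longrightarrow> x \<in> Z \<Longrightarrow> h \<otimes> x \<otimes> inv h \<in> Z"
    and h: "h \<in> N" and x: "x \<in> N" "\<forall>g\<in>N. commutator G x g \<in> Z"
  shows "h \<otimes> x \<otimes> inv h \<in> N \<and> (\<forall>g\<in>N. commutator G (h \<otimes> x \<otimes> inv h) g \<in> Z)"
proof -
  have Nc: "N \<subseteq> carrier G" using N subgroup.subset by blast
  have "commutator G (h \<otimes> x \<otimes> inv h) g \<in> Z" if g: "g \<in> N" for g
  proof -
    have hc: "h \<in> carrier G" using h Nc by blast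
    define g' where "g' = inv h \<otimes> g \<otimes> h"
    have g'N: "g' \<in> N"
      unfolding g'_def using subgroup_conj_closed[OF N subgroup.m_inv_closed[OF N h] g] hc by simp
    have xc: "x \<in> carrier G" and g'c: "g' \<in> carrier G" using x(1) g'N Nc by blast+
    have "h \<otimes> g' \<otimes> inv h = g" unfolding g'_def using hc g Nc by (simp add: m_assoc subsetD)
    hence "commutator G (h \<otimes> x \<otimes> inv h) g = h \<otimes> commutator G x g' \<otimes> inv h"
      using commutator_conj[OF hc xc g'c] by simp
    thus ?thesis using conj[OF h] x g'N by simp
  qed
  thus ?thesis using subgroup_conj_closed[OF N h x(1)] by blast
qed

lemma upper_central_props:
  assumes N: "subgroup N G"
  shows "upper_central G N i \<subseteq> N \<and> subgroup (upper_central G N i) G \<and>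
         (\<forall>h\<in>N. \<forall>x\<in>upper_central G N i. h \<otimes> x \<otimes> inv h \<in> upper_central G N i)"
proof (induct i)
  case 0
  have "h \<otimes> \<one> \<otimes> inv h = \<one>" if "h \<in> N" for h
    using that N subgroup.subset by (metis r_one r_inv subsetD)
  thus ?case using triv_subgroup subgroup.one_closed[OF N] by simp
next
  case (Suc i)
  have Z: "subgroup (upper_central G N i) G"
    and conj: "\<And>h x. h \<in> N \<Longrightarrow> x \<in> upper_central G N i \<Longrightarrow> h \<otimes> x \<otimes> inv h \<in> upper_central G N i"
    using Suc by auto
  show ?case using central_mod_subgroup[OF N Z conj] central_mod_conj_closed[OF N conj] by auto
qed

lemma upper_central_subset: "subgroup N G \<Longrightarrow> upper_central G N i \<subseteq> N"
  using upper_central_props by blast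

lemma upper_central_subgroup: "subgroup N G \<Longrightarrow> subgroup (upper_central G N i) G"
  using upper_central_props by blast

lemma upper_central_conj_closed:
  "subgroup N G \<Longrightarrow> h \<in> N \<Longrightarrow> x \<in> upper_central G N i \<Longrightarrow>
    h \<otimes> x \<otimes> inv h \<in> upper_central G N i"
  using upper_central_props by blast

lemma upper_central_mono:
  assumes N: "subgroup N G"
  shows "upper_central G N i \<subseteq> upper_central G N (Suc i)"
proof
  fix x assume x: "x \<in> upper_central G N i"
  note Z = upper_central_subgroup[OF N, of i]
  have xN: "x \<in> N" using x upper_central_subset[OF N] by blast
  have "commutator G x g \<in> upper_central G N i" if g: "g \<in> N" for g
  proof -
    have "x \<in> carrier G" "g \<in> carrier G" using xN g subgroup.subset[OF N] by blast+
    moreover have "g \<otimes> inv x \<otimes> inv g \<in> upper_central G N i"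
      using upper_central_conj_closed[OF N g subgroup.m_inv_closed[OF Z x]] .
    ultimately show ?thesis using commutator_eq_mult_conj subgroup.m_closed[OF Z x] by simp
  qed
  thus "x \<in> upper_central G N (Suc i)" using xN by simp
qed

lemma lower_central_trivial_of_upper_central:
  assumes N: "subgroup N G" and c: "upper_central G N c = N"
  shows "lower_central G N c = {\<one>}"
proof -
  have "n \<le> c \<Longrightarrow> lower_central G N n \<subseteq> upper_central G N (c - n)" for n
  proof (induct n)
    case 0 thus ?case using c by simp
  next
    case (Suc n)
    hence "lower_central G N n \<subseteq> upper_central G N (Suc (c - Suc n))" using Suc_diff_Suc by simp
    hence "(\<Union>x \<in> lower_central G N n. \<Union>y \<in> N. {commutator G x y}) \<subseteq> upper_central G N (c - Suc n)"
      by auto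
    thus ?case using generate_subgroup_incl[OF _ upper_central_subgroup[OF N]] by simp
  qed
  hence "lower_central G N c \<subseteq> {\<one>}" by (metis diff_self_eq_0 order_refl upper_central.simps(1))
  moreover have "\<one> \<in> lower_central G N c"
    using subgroup.one_closed[OF lower_central_subgroup[OF N]] .
  ultimately show ?thesis by blast
qed

subsection \<open>\<open>p\<close>-cores\<close>

lemma pow_card_subgroup_eq_one:
  assumes H: "subgroup H G" and x: "x \<in> H"
  shows "x [^] card H = \<one>"
proof -
  have "x [^]\<^bsub>G\<lparr>carrier := H\<rparr>\<^esub> order (G\<lparr>carrier := H\<rparr>) = \<one>\<^bsub>G\<lparr>carrier := H\<rparr>\<^esub>"
    using group.pow_order_eq_1[OF subgroup_imp_group[OF H]] x by simp
  thus ?thesis unfolding order_def by (simp add: nat_pow_consistent[symmetric])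
qed

lemma Sylow_subgroups_nonempty:
  assumes fin: "finite (carrier G)" and p: "Factorial_Ring.prime p"
  obtains P where "P \<in> Sylow_subgroups G p"
proof -
  obtain m where "order G = p ^ multiplicity p (order G) * m"
    using multiplicity_dvd by blast
  then obtain P where "subgroup P G" "card P = p ^ multiplicity p (order G)"
    using sylow_thm[OF p is_group _ fin] by blast
  thus ?thesis using that unfolding Sylow_subgroups_def by blast
qed

lemma p_core_subgroup: "subgroup (p_core G p) G"
proof (rule subgroupI)
  show "p_core G p \<subseteq> carrier G" unfolding p_core_def by blast
  have "\<one> \<in> P" if "P \<in> Sylow_subgroups G p" for P
    using that subgroup.one_closed unfolding Sylow_subgroups_def by blast
  thus "p_core G p \<noteq> {}" unfolding p_core_def by blast
next
  fix a b assume a: "a \<in> p_core G p" and b: "b \<in> p_core G p"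
  have "inv a \<in> P" "a \<otimes> b \<in> P" if "P \<in> Sylow_subgroups G p" for P
    using that a b subgroup.m_inv_closed[of P G a] subgroup.m_closed[of P G a b]
    unfolding p_core_def Sylow_subgroups_def by blast+
  thus "inv a \<in> p_core G p" "a \<otimes> b \<in> p_core G p" using a b unfolding p_core_def by auto
qed

lemma conj_image_subgroup:
  assumes P: "subgroup P G" and g: "g \<in> carrier G"
  shows "subgroup ((\<lambda>x. g \<otimes> x \<otimes> inv g) ` P) G"
proof (rule subgroupI)
  have Pc: "P \<subseteq> carrier G" using P subgroup.subset by blast
  show "(\<lambda>x. g \<otimes> x \<otimes> inv g) ` P \<subseteq> carrier G" using Pc g by auto
  show "(\<lambda>x. g \<otimes> x \<otimes> inv g) ` P \<noteq> {}" using subgroup.one_closed[OF P] by blast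
  fix a b assume "a \<in> (\<lambda>x. g \<otimes> x \<otimes> inv g) ` P" "b \<in> (\<lambda>x. g \<otimes> x \<otimes> inv g) ` P"
  then obtain x y where xy: "x \<in> P" "a = g \<otimes> x \<otimes> inv g" "y \<in> P" "b = g \<otimes> y \<otimes> inv g"
    by blast
  have "x \<in> carrier G" "y \<in> carrier G" using xy Pc by blast+
  hence "inv a = g \<otimes> inv x \<otimes> inv g" "a \<otimes> b = g \<otimes> (x \<otimes> y) \<otimes> inv g"
    using xy g by (simp_all add: inv_mult_group m_assoc)
  thus "inv a \<in> (\<lambda>x. g \<otimes> x \<otimes> inv g) ` P" "a \<otimes> b \<in> (\<lambda>x. g \<otimes> x \<otimes> inv g) ` P"
    using subgroup.m_inv_closed[OF P xy(1)] subgroup.m_closed[OF P xy(1,3)] by blast+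
qed

lemma card_conj_image:
  assumes P: "P \<subseteq> carrier G" and g: "g \<in> carrier G"
  shows "card ((\<lambda>x. g \<otimes> x \<otimes> inv g) ` P) = card P"
proof (rule card_image, rule inj_onI)
  fix x y assume "x \<in> P" "y \<in> P" "g \<otimes> x \<otimes> inv g = g \<otimes> y \<otimes> inv g"
  thus "x = y" using P g conjugation_is_inj by blast
qed

lemma p_core_normal: "p_core G p \<lhd> G"
proof (rule normal_invI[OF p_core_subgroup])
  fix g x assume g: "g \<in> carrier G" and x: "x \<in> p_core G p"
  have xc: "x \<in> carrier G" using x unfolding p_core_def by blast
  have "g \<otimes> x \<otimes> inv g \<in> P" if P: "P \<in> Sylow_subgroups G p" for P
  proof -
    have Ps: "subgroup P G" using P unfolding Sylow_subgroups_def by blast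
    hence Pc: "P \<subseteq> carrier G" by (rule subgroup.subset)
    have ig: "inv g \<in> carrier G" using g by simp
    have "(\<lambda>y. inv g \<otimes> y \<otimes> inv (inv g)) ` P \<in> Sylow_subgroups G p"
      using conj_image_subgroup[OF Ps ig] card_conj_image[OF Pc ig] P
      unfolding Sylow_subgroups_def by auto
    hence "x \<in> (\<lambda>y. inv g \<otimes> y \<otimes> inv (inv g)) ` P" using x unfolding p_core_def by blast
    then obtain y where y: "y \<in> P" "x = inv g \<otimes> y \<otimes> inv (inv g)" by blast
    have "y \<in> carrier G" using y Pc by blast
    hence "g \<otimes> x \<otimes> inv g = y" using y(2) g by (simp add: m_assoc)
    thus ?thesis using y by simp
  qed
  thus "g \<otimes> x \<otimes> inv g \<in> p_core G p" unfolding p_core_def using g xc by simp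
qed

lemma p_core_subset_Sylow: "P \<in> Sylow_subgroups G p \<Longrightarrow> p_core G p \<subseteq> P"
  unfolding p_core_def by blast

lemma card_p_core:
  assumes fin: "finite (carrier G)" and p: "Factorial_Ring.prime p"
  obtains f where "card (p_core G p) = p ^ f"
proof -
  obtain P where P: "P \<in> Sylow_subgroups G p" using Sylow_subgroups_nonempty[OF fin p] .
  hence "card (p_core G p) dvd p ^ multiplicity p (order G)"
    using card_subgroup_dvd[OF p_core_subgroup _ p_core_subset_Sylow]
    unfolding Sylow_subgroups_def by fastforce
  thus ?thesis using that divides_primepow_nat[OF p] by blast
qed

lemma p_core_inter:
  assumes fin: "finite (carrier G)" and p: "Factorial_Ring.prime p" and q: "Factorial_Ring.prime q"
    and pq: "p \<noteq> q" and x: "x \<in> p_core G p" "x \<in> p_core G q"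
  shows "x = \<one>"
proof -
  have xc: "x \<in> carrier G" using x unfolding p_core_def by blast
  obtain f g where f: "card (p_core G p) = p ^ f" and g: "card (p_core G q) = q ^ g"
    using card_p_core[OF fin p] card_p_core[OF fin q] by metis
  have "ord x dvd p ^ f" "ord x dvd q ^ g"
    using pow_card_subgroup_eq_one[OF p_core_subgroup] x f g pow_eq_id[OF xc] by metis+
  moreover have "coprime (p ^ f) (q ^ g)" using primes_coprime[OF p q pq] by simp
  ultimately have "ord x = 1" using coprime_common_divisor_nat by blast
  thus ?thesis using ord_eq_1[OF xc] by simp
qed

lemma p_core_commute:
  assumes fin: "finite (carrier G)" and p: "Factorial_Ring.prime p" and q: "Factorial_Ring.prime q"
    and pq: "p \<noteq> q" and a: "a \<in> p_core G p" and h: "h \<in> p_core G q"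
  shows "commutator G a h = \<one>"
proof -
  have ac: "a \<in> carrier G" and hc: "h \<in> carrier G" using a h unfolding p_core_def by auto
  have "h \<otimes> inv a \<otimes> inv h \<in> p_core G p"
    using p_core_normal normal_inv_iff hc subgroup.m_inv_closed[OF p_core_subgroup a] by blast
  hence "commutator G a h \<in> p_core G p"
    using commutator_eq_mult_conj[OF ac hc] subgroup.m_closed[OF p_core_subgroup a] by simp
  moreover have "a \<otimes> h \<otimes> inv a \<in> p_core G q"
    using p_core_normal normal_inv_iff ac h by blast
  hence "commutator G a h \<in> p_core G q"
    using commutator_eq_conj_mult[OF ac hc]
      subgroup.m_closed[OF p_core_subgroup _ subgroup.m_inv_closed[OF p_core_subgroup h]] by simp
  ultimately show ?thesis using p_core_inter[OF fin p q pq] by blast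
qed

lemma product_of_p_cores_subgroup: "subgroup (product_of_p_cores G) G"
  unfolding product_of_p_cores_def by (rule generate_is_subgroup) (auto simp: p_core_def)

lemma p_core_subset_product:
  "Factorial_Ring.prime p \<Longrightarrow> p_core G p \<subseteq> product_of_p_cores G"
  unfolding product_of_p_cores_def by (auto intro: generate.incl)

lemma product_of_p_cores_normal: "product_of_p_cores G \<lhd> G"
  unfolding product_of_p_cores_def
proof (rule normal_generateI)
  show "(\<Union>p\<in>{p. Factorial_Ring.prime p}. p_core G p) \<subseteq> carrier G" by (auto simp: p_core_def)
  fix h g assume "h \<in> (\<Union>p\<in>{p. Factorial_Ring.prime p}. p_core G p)" and g: "g \<in> carrier G"
  then obtain p where p: "Factorial_Ring.prime p" "h \<in> p_core G p" by blast
  hence "g \<otimes> h \<otimes> inv g \<in> p_core G p" using p_core_normal normal_inv_iff g by blast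
  thus "g \<otimes> h \<otimes> inv g \<in> (\<Union>p\<in>{p. Factorial_Ring.prime p}. p_core G p)" using p(1) by blast
qed

subsection \<open>\<open>S(G)\<close> lies in the product of the \<open>p\<close>-cores\<close>

lemma coprime_index_Sylow:
  assumes fin: "finite (carrier G)" and p: "Factorial_Ring.prime p"
    and P: "P \<in> Sylow_subgroups G p"
  shows "coprime p (card (rcosets P))"
proof -
  have Ps: "subgroup P G" and cardP: "card P = p ^ multiplicity p (order G)"
    using P unfolding Sylow_subgroups_def by auto
  have "card (rcosets P) * p ^ multiplicity p (order G) = order G"
    using lagrange[OF Ps] cardP by simp
  hence "card (rcosets P) = order G div p ^ multiplicity p (order G)"
    using prime_gt_0_nat[OF p] by (metis nonzero_mult_div_cancel_right power_not_zero not_gr0)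
  moreover have "order G \<noteq> 0" using fin order_gt_0_iff_finite by blast
  ultimately have "\<not> p dvd card (rcosets P)"
    using multiplicity_decompose[of "order G" p] prime_gt_1_nat[OF p] by simp
  thus ?thesis using prime_imp_coprime[OF p] by blast
qed

lemma mem_subgroup_of_coprime_powers:
  assumes H: "subgroup H G" and w: "w \<in> carrier G"
    and wn: "w [^] (n::nat) = \<one>" and wm: "w [^] (m::nat) \<in> H" and cop: "coprime m n"
  shows "w \<in> H"
proof (cases "m = 0")
  case True
  hence "n = 1" using cop by simp
  thus ?thesis using wn w subgroup.one_closed[OF H] by simp
next
  case False
  obtain c d where "m * c = n * d + gcd m n" using bezout_nat[OF False] by blast
  hence "m * c = n * d + 1" using cop by simp
  hence "w [^] (m * c) = (w [^] n) [^] d \<otimes> w"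
    using w by (simp add: nat_pow_pow nat_pow_mult[symmetric])
  hence "w = (w [^] m) [^] c" using wn w by (simp add: nat_pow_pow)
  thus ?thesis using subgroup_nat_pow_closed[OF H wm, of c] by simp
qed

lemma S_set_p_part_in_p_core:
  assumes fin: "finite (carrier G)" and p: "Factorial_Ring.prime p" and x: "x \<in> S_set G"
    and w: "(x [^] (k::nat)) [^] (p ^ e) = \<one>"
  shows "x [^] k \<in> p_core G p"
proof -
  have xc: "x \<in> carrier G" using x unfolding S_set_def by blast
  have "x [^] k \<in> P" if P: "P \<in> Sylow_subgroups G p" for P
  proof -
    have Ps: "subgroup P G" using P unfolding Sylow_subgroups_def by blast
    have "finite (rcosets P)" using fin unfolding RCOSETS_def r_coset_def by auto
    hence "x [^] card (rcosets P) \<in> P" using x Ps unfolding S_set_def by blast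
    hence "(x [^] card (rcosets P)) [^] k \<in> P" using subgroup_nat_pow_closed[OF Ps] by blast
    hence "(x [^] k) [^] card (rcosets P) \<in> P" by (simp add: nat_pow_pow[OF xc] mult.commute)
    moreover have "coprime (card (rcosets P)) (p ^ e)"
      using coprime_index_Sylow[OF fin p P] by (simp add: coprime_commute)
    ultimately show ?thesis using mem_subgroup_of_coprime_powers[OF Ps _ w] xc by simp
  qed
  thus ?thesis unfolding p_core_def using xc by simp
qed

lemma pow_decomp_coprime_order:
  assumes y: "y \<in> carrier G" and ord: "ord y = a * b" and cop: "coprime a b" and a: "a \<noteq> 0"
  obtains s t :: nat where "y = inv (y [^] t) \<otimes> y [^] s"
    "(y [^] s) [^] b = \<one>" "(y [^] t) [^] a = \<one>"
proof -
  obtain c d where "a * c = b * d + gcd a b" using bezout_nat[OF a] by blast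
  hence cd: "a * c = b * d + 1" using cop by simp
  have yn: "y [^] ord y = \<one>" using pow_ord_eq_1[OF y] .
  have "y [^] (a * c) = y [^] (b * d) \<otimes> y" unfolding cd using y by (simp add: nat_pow_mult[symmetric])
  hence "y = inv (y [^] (b * d)) \<otimes> y [^] (a * c)" using y by simp
  moreover have "(y [^] (a * c)) [^] b = (y [^] ord y) [^] c" "(y [^] (b * d)) [^] a = (y [^] ord y) [^] d"
    using y unfolding ord by (simp_all add: nat_pow_pow mult_ac)
  hence "(y [^] (a * c)) [^] b = \<one>" "(y [^] (b * d)) [^] a = \<one>" using yn by simp_all
  ultimately show ?thesis using that by blast
qed

text \<open>Induction on the order: split \<open>y\<close> into a \<open>p\<close>-part and a part of smaller order.\<close>

lemma mem_subgroup_of_prime_power_parts: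
  assumes fin: "finite (carrier G)" and F: "subgroup F G" and y: "y \<in> carrier G"
    and parts: "\<And>k p e. Factorial_Ring.prime (p::nat) \<Longrightarrow> (y [^] (k::nat)) [^] (p ^ e) = \<one> \<Longrightarrow>
      y [^] k \<in> F"
  shows "y \<in> F"
  using y parts
proof (induct "ord y" arbitrary: y rule: less_induct)
  case less
  note yc = less.prems(1)
  show ?case
  proof (cases "ord y = 1")
    case True
    thus ?thesis using ord_eq_1[OF yc] subgroup.one_closed[OF F] by simp
  next
    case False
    then obtain p where p: "Factorial_Ring.prime p" "p dvd ord y" using prime_factor_nat by blast
    have n0: "ord y \<noteq> 0" using ord_ge_1[OF fin yc] by simp
    have nu: "\<not> is_unit p" using prime_gt_1_nat[OF p(1)] by simp
    define e where "e = multiplicity p (ord y)"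
    define m where "m = ord y div p ^ e"
    have nm: "ord y = p ^ e * m" unfolding m_def e_def using multiplicity_dvd[of p "ord y"] by simp
    have "coprime p m"
      using prime_imp_coprime[OF p(1) multiplicity_decompose[OF n0 nu]] unfolding m_def e_def .
    hence cop: "coprime (p ^ e) m" by simp
    have "e \<ge> 1" unfolding e_def using multiplicity_geI[OF n0 nu, of 1] p(2) by simp
    hence "p ^ e > 1" using one_less_power[OF prime_gt_1_nat[OF p(1)]] by simp
    moreover have m0: "m > 0" using nm n0 by (cases m) auto
    ultimately have m_less: "m < ord y" using nm by simp
    have "p ^ e \<noteq> 0" using prime_gt_0_nat[OF p(1)] by simp
    then obtain s t :: nat where yst: "y = inv (y [^] t) \<otimes> y [^] s"
      and s: "(y [^] s) [^] m = \<one>" and t: "(y [^] t) [^] (p ^ e) = \<one>"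
      using pow_decomp_coprime_order[OF yc nm cop] by blast
    have "ord (y [^] s) \<le> m" using dvd_imp_le[OF _ m0] pow_eq_id s yc by simp
    hence "ord (y [^] s) < ord y" using m_less by simp
    moreover have "(y [^] s) [^] k \<in> F"
      if "Factorial_Ring.prime q" "((y [^] s) [^] k) [^] (q ^ f) = \<one>"
      for k q f :: nat
      using less.prems(2)[OF that(1), of "s * k" f] that(2) by (simp add: nat_pow_pow[OF yc])
    ultimately have "y [^] s \<in> F" using less.hyps[OF _ nat_pow_closed[OF yc]] by blast
    moreover have "y [^] t \<in> F" using less.prems(2)[OF p(1) t] .
    ultimately show ?thesis
      by (subst yst) (rule subgroup.m_closed[OF F subgroup.m_inv_closed[OF F]])
  qed
qed

lemma S_set_subset_product_of_p_cores:
  assumes fin: "finite (carrier G)"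
  shows "S_set G \<subseteq> product_of_p_cores G"
proof
  fix x assume x: "x \<in> S_set G"
  hence "x \<in> carrier G" unfolding S_set_def by blast
  thus "x \<in> product_of_p_cores G"
    using mem_subgroup_of_prime_power_parts[OF fin product_of_p_cores_subgroup]
      S_set_p_part_in_p_core[OF fin _ x] p_core_subset_product by blast
qed

subsection \<open>The product of the \<open>p\<close>-cores is nilpotent\<close>

lemma p_core_central_mod:
  assumes fin: "finite (carrier G)" and p: "Factorial_Ring.prime p" and Z: "subgroup Z G"
    and conj: "\<And>h x. h \<in> p_core G p \<Longrightarrow> x \<in> Z \<Longrightarrow> h \<otimes> x \<otimes> inv h \<in> Z"
    and nsub: "\<not> p_core G p \<subseteq> Z"
  obtains a where "a \<in> p_core G p" "a \<notin> Z" "\<And>h. h \<in> p_core G p \<Longrightarrow> commutator G a h \<in> Z"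
proof -
  define K where "K = G\<lparr>carrier := p_core G p\<rparr>"
  define W where "W = p_core G p \<inter> Z"
  note Op = p_core_subgroup[of p]
  have K: "group K" unfolding K_def using subgroup_imp_group[OF Op] .
  have finK: "finite (carrier K)"
    unfolding K_def using fin subgroup.subset[OF Op] finite_subset by auto
  obtain f where f: "order K = p ^ f" using card_p_core[OF fin p] unfolding K_def order_def by auto
  have "W \<lhd> K"
  proof (rule group.normal_invI[OF K])
    show "subgroup W K" unfolding K_def W_def
      using subgroup_incl[OF subgroups_Inter_pair[OF Op Z] Op] by blast
    fix x h assume "x \<in> carrier K" "h \<in> W"
    thus "x \<otimes>\<^bsub>K\<^esub> h \<otimes>\<^bsub>K\<^esub> inv\<^bsub>K\<^esub> x \<in> W"
      using subgroup_conj_closed[OF Op] conj Op unfolding K_def W_def by simp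
  qed
  moreover have "W \<noteq> carrier K" using nsub unfolding W_def K_def by auto
  ultimately obtain a where a: "a \<in> p_core G p" "a \<notin> W"
    and aW: "\<And>h. h \<in> p_core G p \<Longrightarrow> commutator K a h \<in> W"
    using group.p_group_central_mod_normal[OF K finK p f] unfolding K_def by auto
  have "commutator K a h = commutator G a h" if "h \<in> p_core G p" for h
    using a(1) that Op unfolding K_def commutator_def by simp
  thus ?thesis using that a aW unfolding W_def by auto
qed

lemma upper_central_grows:
  assumes fin: "finite (carrier G)"
    and ne: "upper_central G (product_of_p_cores G) i \<noteq> product_of_p_cores G"
  obtains a where "a \<in> upper_central G (product_of_p_cores G) (Suc i)"
    "a \<notin> upper_central G (product_of_p_cores G) i"
proof -
  define N where "N = product_of_p_cores G"
  define Z where "Z = upper_central G N i"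
  define S where "S = (\<Union>p\<in>{p. Factorial_Ring.prime p}. p_core G p)"
  note NS = product_of_p_cores_subgroup[folded N_def]
  have Z: "subgroup Z G" and ZN: "Z \<subseteq> N"
    and conj: "\<And>h x. h \<in> N \<Longrightarrow> x \<in> Z \<Longrightarrow> h \<otimes> x \<otimes> inv h \<in> Z"
    unfolding Z_def using upper_central_subgroup[OF NS] upper_central_subset[OF NS]
      upper_central_conj_closed[OF NS] by auto
  have "\<not> S \<subseteq> Z"
    using generate_subgroup_incl[OF _ Z] ZN ne unfolding S_def Z_def N_def product_of_p_cores_def
    by blast
  then obtain p where p: "Factorial_Ring.prime p" and nsub: "\<not> p_core G p \<subseteq> Z"
    unfolding S_def by blast
  have pN: "p_core G p \<subseteq> N" unfolding N_def using p_core_subset_product[OF p] .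
  obtain a where a: "a \<in> p_core G p" "a \<notin> Z"
    and aZ: "\<And>h. h \<in> p_core G p \<Longrightarrow> commutator G a h \<in> Z"
    using p_core_central_mod[OF fin p Z _ nsub] conj pN by blast
  have ac: "a \<in> carrier G" using a(1) unfolding p_core_def by blast
  have gen: "commutator G a h \<in> Z" if h: "h \<in> S" for h
  proof -
    obtain q where q: "Factorial_Ring.prime q" "h \<in> p_core G q" using h unfolding S_def by blast
    show ?thesis
    proof (cases "q = p")
      case True thus ?thesis using aZ q(2) by blast
    next
      case False
      thus ?thesis using p_core_commute[OF fin p q(1) _ a(1) q(2)] subgroup.one_closed[OF Z] by auto
    qed
  qed
  have "S \<subseteq> carrier G" unfolding S_def by (auto simp: p_core_def)
  hence "commutator G a h \<in> Z" if "h \<in> N" for h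
    using commutator_generate_mem[OF _ Z ac _ gen] that conj
    unfolding N_def product_of_p_cores_def S_def by blast
  moreover have "a \<in> N" using a(1) pN by blast
  ultimately have "a \<in> upper_central G N (Suc i)" unfolding Z_def by simp
  thus ?thesis using that a(2) unfolding Z_def N_def by blast
qed

lemma product_of_p_cores_nilpotent:
  assumes fin: "finite (carrier G)"
  shows "nilpotent_group (G\<lparr>carrier := product_of_p_cores G\<rparr>)"
proof -
  define N where "N = product_of_p_cores G"
  note NS = product_of_p_cores_subgroup[folded N_def]
  have finN: "finite N" using NS subgroup.subset fin finite_subset by blast
  have "\<exists>c. upper_central G N c = N"
  proof (rule ccontr)
    assume "\<nexists>c. upper_central G N c = N"
    hence "i < card (upper_central G N i)" for i
    proof (induct i)
      case 0 thus ?case by simp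
    next
      case (Suc i)
      obtain a where "a \<in> upper_central G N (Suc i)" "a \<notin> upper_central G N i"
        using upper_central_grows[OF fin] Suc.prems unfolding N_def by blast
      hence "upper_central G N i \<subset> upper_central G N (Suc i)"
        using upper_central_mono[OF NS, of i] by blast
      moreover have "finite (upper_central G N (Suc i))"
        using upper_central_subset[OF NS] finN finite_subset by blast
      ultimately have "card (upper_central G N i) < card (upper_central G N (Suc i))"
        by (rule psubset_card_mono[rotated])
      thus ?case using Suc.hyps[OF Suc.prems] by simp
    qed
    moreover have "card (upper_central G N (card N)) \<le> card N"
      using upper_central_subset[OF NS] finN card_mono by blast
    ultimately show False by (metis not_le)
  qed
  then obtain c where "upper_central G N c = N" by blast
  hence "lower_central G N c = {\<one>}" using lower_central_trivial_of_upper_central[OF NS] by simp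
  hence "lower_central_series (G\<lparr>carrier := N\<rparr>) c = {\<one>\<^bsub>G\<lparr>carrier := N\<rparr>\<^esub>}"
    using lower_central_series_eq[OF NS] by simp
  thus ?thesis unfolding nilpotent_group_def N_def using subgroup_imp_group NS N_def by blast
qed

end

theorem proposition5p1:
  assumes "group G" and "finite (carrier G)"
  shows "S_set G = fitting_subgroup G"
proof -
  interpret group G by fact
  note fin = assms(2)
  have F_normal: "product_of_p_cores G \<lhd> G"
    and F_nilpotent: "nilpotent_group (G\<lparr>carrier := product_of_p_cores G\<rparr>)"
    using product_of_p_cores_normal product_of_p_cores_nilpotent[OF fin] .
  have S_eq: "S_set G = product_of_p_cores G"
    using S_set_subset_product_of_p_cores[OF fin]
      nilpotent_normal_subset_S_set[OF fin F_normal F_nilpotent] by blast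
  have "fitting_subgroup G = product_of_p_cores G"
    using fitting_subgroup_eqI[OF F_normal F_nilpotent] nilpotent_normal_subset_S_set[OF fin] S_eq
    by blast
  thus ?thesis using S_eq by simp
qed

end
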